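(* Let $\mathcal P$ be a CPOS $2n$-gon which is equal-area, and write $P_{i+n+1}-P_{i+n}=-\alpha_i(P_{i+1}-P_i)$ with $\alpha_i>0$, $1\le i\le n$. Then either $\alpha_i=1$ for all $i$, in which case $\mathcal P$ is symmetric with respect to a point, or $n$ is odd and there is $\alpha>0$, $\alpha\ne1$, such that $\alpha_i=\alpha$ for all odd $i$ and $\alpha_i=\alpha^{-1}$ for all even $i$ ($1\le i\le n$).
   Context: A CPOS $2n$-gon ($n\ge2$) is a closed planar polygon $\mathcal P$ with vertices $P_1,\dots,P_{2n}$ (indices mod $2n$) bounding a convex region, with no two adjacent sides parallel, with $P_{i+n+1}-P_{i+n}$ parallel to $P_{i+1}-P_i$ for all $i$ (by convexity these are then antiparallel), and positively oriented: $[P_{i+1}-P_i,P_{j+1}-P_j]>0$ for $1\le i<j\le n$ ($[\cdot,\cdot]$ = determinant). $\mathcal P$ is equal-area if $[P_{i+1}-P_i,P_i-P_{i-1}]$ is the same for all $i$. $\mathcal P$ is symmetric with respect to $O$ if $P_{i+n}-O=O-P_i$ for all $i$. *)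

theory Defs
  imports Complex_Main
begin

text \<open>Points of the plane are complex numbers; det2 u v is the determinant [u,v].
  A 2n-gon is a map P :: nat => complex, periodic with period 2n (indices mod 2n);
  the vertices are P 1, ..., P (2n) and P 0 = P (2n).\<close>

definition det2 :: "complex \<Rightarrow> complex \<Rightarrow> real" where
  "det2 u v = Re u * Im v - Im u * Re v"

definition cpos :: "nat \<Rightarrow> (nat \<Rightarrow> complex) \<Rightarrow> bool" where
  "cpos n P \<longleftrightarrow>
     n \<ge> 2 \<and>
     (\<forall>i. P (i + 2*n) = P i) \<and>
     \<comment> \<open>convex: all vertices lie (weakly) on one side of the line through each side\<close>
     (\<forall>i\<in>{1..2*n}. (\<forall>j\<in>{1..2*n}. det2 (P (i+1) - P i) (P j - P i) \<ge> 0) \<or>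
                    (\<forall>j\<in>{1..2*n}. det2 (P (i+1) - P i) (P j - P i) \<le> 0)) \<and>
     \<comment> \<open>no two adjacent sides parallel\<close>
     (\<forall>i\<in>{1..2*n}. det2 (P (i+1) - P i) (P i - P (i-1)) \<noteq> 0) \<and>
     \<comment> \<open>opposite sides parallel\<close>
     (\<forall>i\<in>{1..n}. det2 (P (i+n+1) - P (i+n)) (P (i+1) - P i) = 0) \<and>
     \<comment> \<open>positively oriented\<close>
     (\<forall>i j. 1 \<le> i \<and> i < j \<and> j \<le> n \<longrightarrow> det2 (P (i+1) - P i) (P (j+1) - P j) > 0)"

definition equal_area :: "nat \<Rightarrow> (nat \<Rightarrow> complex) \<Rightarrow> bool" where
  "equal_area n P \<longleftrightarrow>
     (\<exists>c. \<forall>i\<in>{1..2*n}. det2 (P (i+1) - P i) (P i - P (i-1)) = c)"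

definition symmetric_wrt :: "nat \<Rightarrow> (nat \<Rightarrow> complex) \<Rightarrow> complex \<Rightarrow> bool" where
  "symmetric_wrt n P Q \<longleftrightarrow> (\<forall>i. P (i+n) - Q = Q - P i)"

end

theory Submission
  imports Defs
begin

(* Write s_i = P(i+1) - P i for the sides, so s_{i+n} = -alpha_i s_i for
   1 <= i <= n, and let c be the common value of the areas det2 s_i s_{i-1}; c is nonzero
   because adjacent sides are not parallel.
   (1) Comparing the area at vertex i+n with the one at vertex i gives
       alpha_i alpha_{i-1} c = c, hence alpha_i alpha_{i-1} = 1 for 2 <= i <= n.
   (2) Comparing vertex n+1 with vertex 1 (where s_0 = s_{2n} = -alpha_n s_n) gives
       alpha_1 [s_1,s_n] = alpha_n [s_1,s_n], and [s_1,s_n] > 0, so alpha_1 = alpha_n.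
   (3) By (1) the alpha_i alternate between a = alpha_1 and 1/a; if n is even, (2) forces
       a = 1/a, i.e. a = 1.
   (4) If all alpha_i = 1, then P(i+n) + P i is constant, so P is symmetric about half
       of that constant. *)

lemma det2_neg_scale_left: "det2 (- (of_real a * u)) w = - a * det2 u w"
  by (simp add: det2_def algebra_simps)

lemma det2_neg_scale_right: "det2 u (- (of_real b * w)) = - b * det2 u w"
  by (simp add: det2_def algebra_simps)

lemma det2_rescaled_both_eq:
  assumes "det2 (- (of_real a * u)) (- (of_real b * w)) = det2 u w" and "det2 u w \<noteq> 0"
  shows "a * b = 1"
  using assms by (simp add: det2_neg_scale_left det2_neg_scale_right mult.commute[of b a])

lemma det2_rescaled_one_eq:
  assumes "det2 (- (of_real a * u)) w = det2 u (- (of_real b * w))" and "det2 u w \<noteq> 0"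
  shows "a = b"
  using assms by (simp add: det2_neg_scale_left det2_neg_scale_right)

lemma reciprocal_chain_alternates:
  fixes \<alpha> :: "nat \<Rightarrow> real"
  assumes recip: "\<And>i. 2 \<le> i \<Longrightarrow> i \<le> n \<Longrightarrow> \<alpha> i * \<alpha> (i - 1) = 1"
    and "1 \<le> i" "i \<le> n"
  shows "\<alpha> i = (if odd i then \<alpha> 1 else inverse (\<alpha> 1))"
  using assms(2,3)
proof (induction i)
  case 0
  then show ?case by simp
next
  case (Suc k)
  show ?case
  proof (cases "k = 0")
    case True
    then show ?thesis by simp
  next
    case False
    with Suc have ih: "\<alpha> k = (if odd k then \<alpha> 1 else inverse (\<alpha> 1))" by simp
    have "\<alpha> (Suc k) * \<alpha> k = 1" using recip[of "Suc k"] Suc.prems False by simp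
    then have "\<alpha> (Suc k) = inverse (\<alpha> k)" by (metis inverse_unique mult.commute)
    then show ?thesis using ih by simp
  qed
qed

lemma periodic_vanishing:
  fixes g :: "nat \<Rightarrow> 'a::zero"
  assumes period: "\<And>i. g (i + n) = g i"
    and zero: "\<And>i. 1 \<le> i \<Longrightarrow> i \<le> n \<Longrightarrow> g i = 0" and "n \<ge> 1"
  shows "g i = 0"
proof -
  have shift: "g (k * n + r) = g r" for k r
  proof (induction k)
    case (Suc k)
    have "Suc k * n + r = (k * n + r) + n" by simp
    then show ?case using Suc period[of "k * n + r"] by metis
  qed simp
  have "g i = g (i mod n)" using shift[of "i div n" "i mod n"] by simp
  also have "g (i mod n) = 0"
  proof (cases "i mod n = 0")
    case True
    then show ?thesis using period[of 0] zero[of n] \<open>n \<ge> 1\<close> by simp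
  next
    case False
    then show ?thesis using zero[of "i mod n"] \<open>n \<ge> 1\<close> by (simp add: less_imp_le_nat)
  qed
  finally show ?thesis .
qed

lemma equal_area_ratios_reciprocal:
  fixes P :: "nat \<Rightarrow> complex" and \<alpha> :: "nat \<Rightarrow> real"
  assumes area: "\<And>i. 1 \<le> i \<Longrightarrow> i \<le> 2*n \<Longrightarrow> det2 (P (i+1) - P i) (P i - P (i-1)) = c"
    and "c \<noteq> 0"
    and opp: "\<And>i. 1 \<le> i \<Longrightarrow> i \<le> n \<Longrightarrow>
                P (i+n+1) - P (i+n) = - (of_real (\<alpha> i) * (P (i+1) - P i))"
    and "2 \<le> i" "i \<le> n"
  shows "\<alpha> i * \<alpha> (i - 1) = 1"
proof -
  have prev: "P (i+n) - P (i+n-1) = - (of_real (\<alpha> (i-1)) * (P i - P (i-1)))"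
    using opp[of "i - 1"] \<open>2 \<le> i\<close> \<open>i \<le> n\<close> by (simp add: Suc_diff_le)
  have "det2 (- (of_real (\<alpha> i) * (P (i+1) - P i))) (- (of_real (\<alpha> (i-1)) * (P i - P (i-1))))
        = det2 (P (i+1) - P i) (P i - P (i-1))"
    using area[of "i+n"] area[of i] opp[of i] prev \<open>2 \<le> i\<close> \<open>i \<le> n\<close> by simp
  moreover have "det2 (P (i+1) - P i) (P i - P (i-1)) \<noteq> 0"
    using area[of i] \<open>c \<noteq> 0\<close> \<open>2 \<le> i\<close> \<open>i \<le> n\<close> by simp
  ultimately show ?thesis by (rule det2_rescaled_both_eq)
qed

text \<open>Step (2): comparing the areas at the vertices n+1 and 1
  shows that the first and the last ratio coincide.\<close>

lemma equal_area_first_last_ratio: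
  fixes P :: "nat \<Rightarrow> complex" and \<alpha> :: "nat \<Rightarrow> real"
  assumes area: "\<And>i. 1 \<le> i \<Longrightarrow> i \<le> 2*n \<Longrightarrow> det2 (P (i+1) - P i) (P i - P (i-1)) = c"
    and per: "P 0 = P (2*n)" "P 1 = P (2*n+1)"
    and opp: "\<And>i. 1 \<le> i \<Longrightarrow> i \<le> n \<Longrightarrow>
                P (i+n+1) - P (i+n) = - (of_real (\<alpha> i) * (P (i+1) - P i))"
    and nonparallel: "det2 (P 2 - P 1) (P (n+1) - P n) \<noteq> 0" and "1 \<le> n"
  shows "\<alpha> 1 = \<alpha> n"
proof -
  have first: "P (n+2) - P (n+1) = - (of_real (\<alpha> 1) * (P 2 - P 1))"
    using opp[of 1] \<open>1 \<le> n\<close> by (simp add: add.commute numeral_2_eq_2)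
  have last: "P 1 - P 0 = - (of_real (\<alpha> n) * (P (n+1) - P n))"
    using opp[of n] per \<open>1 \<le> n\<close> by (simp add: mult_2)
  have "det2 (- (of_real (\<alpha> 1) * (P 2 - P 1))) (P (n+1) - P n)
        = det2 (P 2 - P 1) (- (of_real (\<alpha> n) * (P (n+1) - P n)))"
    using area[of "n+1"] area[of 1] first last \<open>1 \<le> n\<close>
    by (simp add: numeral_2_eq_2 add.commute)
  then show ?thesis using det2_rescaled_one_eq nonparallel by blast
qed

lemma opposite_sides_reversed_symmetric:
  fixes P :: "nat \<Rightarrow> complex"
  assumes per: "\<And>i. P (i + 2*n) = P i" and "1 \<le> n"
    and opp: "\<And>i. 1 \<le> i \<Longrightarrow> i \<le> n \<Longrightarrow> P (i+n+1) - P (i+n) = - (P (i+1) - P i)"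
  shows "symmetric_wrt n P ((P n + P 0) / 2)"
proof -
  define f where "f i = P (i+n) + P i" for i
  have f_period: "f (i+n) = f i" for i
    unfolding f_def using per[of i] by (simp add: mult_2 add.commute add.left_commute)
  have "f (i+1) - f i = 0" for i
  proof (rule periodic_vanishing[where n = n])
    show "f (j+n+1) - f (j+n) = f (j+1) - f j" for j
      using f_period[of j] f_period[of "j+1"] by (simp add: add.commute add.left_commute)
    show "f (j+1) - f j = 0" if "1 \<le> j" "j \<le> n" for j
      using opp[OF that] unfolding f_def by (simp add: algebra_simps)
  qed fact
  then have "f i = f 0" for i by (induction i) simp_all
  then have centre: "(P n + P 0) / 2 = (P (i+n) + P i) / 2" for i unfolding f_def by simp
  show ?thesis
    unfolding symmetric_wrt_def
  proof
    fix i
    show "P (i+n) - (P n + P 0) / 2 = (P n + P 0) / 2 - P i"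
      unfolding centre[of i] by (simp add: field_simps)
  qed
qed

theorem mainTheorem4:
  fixes n :: nat and P :: "nat \<Rightarrow> complex" and \<alpha> :: "nat \<Rightarrow> real"
  assumes "cpos n P"
    and "equal_area n P"
    and "\<forall>i\<in>{1..n}. \<alpha> i > 0 \<and>
           P (i+n+1) - P (i+n) = - (of_real (\<alpha> i) * (P (i+1) - P i))"
  shows "((\<forall>i\<in>{1..n}. \<alpha> i = 1) \<and> (\<exists>Q. symmetric_wrt n P Q)) \<or>
         (odd n \<and> (\<exists>a>0. a \<noteq> 1 \<and>
            (\<forall>i\<in>{1..n}. (odd i \<longrightarrow> \<alpha> i = a) \<and> (even i \<longrightarrow> \<alpha> i = inverse a))))"
proof -
  have n2: "n \<ge> 2" and per: "\<And>i. P (i + 2*n) = P i"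
    and nonparallel: "\<And>i. i \<in> {1..2*n} \<Longrightarrow> det2 (P (i+1) - P i) (P i - P (i-1)) \<noteq> 0"
    and pos: "\<And>i j. 1 \<le> i \<Longrightarrow> i < j \<Longrightarrow> j \<le> n \<Longrightarrow> det2 (P (i+1) - P i) (P (j+1) - P j) > 0"
    using assms(1) unfolding cpos_def by auto
  obtain c where area: "\<And>i. 1 \<le> i \<Longrightarrow> i \<le> 2*n \<Longrightarrow> det2 (P (i+1) - P i) (P i - P (i-1)) = c"
    using assms(2) unfolding equal_area_def by auto
  have c_nonzero: "c \<noteq> 0" using area[of 1] nonparallel[of 1] n2 by simp
  have pos_ratio: "\<And>i. 1 \<le> i \<Longrightarrow> i \<le> n \<Longrightarrow> \<alpha> i > 0"
    and opp: "\<And>i. 1 \<le> i \<Longrightarrow> i \<le> n \<Longrightarrow> P (i+n+1) - P (i+n) = - (of_real (\<alpha> i) * (P (i+1) - P i))"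
    using assms(3) by auto
  define a where "a = \<alpha> 1"
  have a_pos: "a > 0" using pos_ratio[of 1] n2 unfolding a_def by simp
  have alternate: "\<And>i. 1 \<le> i \<Longrightarrow> i \<le> n \<Longrightarrow> \<alpha> i = (if odd i then a else inverse a)"
    unfolding a_def
    using reciprocal_chain_alternates equal_area_ratios_reciprocal[OF area c_nonzero opp] by blast
  have first_last: "a = \<alpha> n"
    unfolding a_def
    using equal_area_first_last_ratio[OF area _ _ opp] per[of 0] per[of 1] pos[of 1 n] n2
    by (simp add: numeral_2_eq_2 add.commute)
  show ?thesis
  proof (cases "a = 1")
    case True
    then have all_one: "\<forall>i\<in>{1..n}. \<alpha> i = 1" using alternate by auto
    then have "symmetric_wrt n P ((P n + P 0) / 2)"
      using opposite_sides_reversed_symmetric[of P n] per opp n2 by simp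
    with all_one show ?thesis by blast
  next
    case False
    have "odd n"
    proof (rule ccontr)
      assume "\<not> odd n"
      then have "a = inverse a" using first_last alternate[of n] n2 by simp
      then have "(a - 1) * (a + 1) = 0" using a_pos by (simp add: field_simps)
      with a_pos False show False by simp
    qed
    then show ?thesis using alternate a_pos False by auto
  qed
qed

end
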